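(* Let $\epsilon_1,\epsilon_2,\dots$ be independent Rademacher random variables and $S_m=\epsilon_1+\dots+\epsilon_m$ (with $S_0=0$). For $n\ge1$ define the intervals $$A_n=[-1-\sqrt n,\,-\sqrt{n-1}),\qquad B_n=[-\sqrt{n-1},\,1-\sqrt n).$$ Let $k\ge 2$ be an integer. Then: (i) For $n=k^2-1$: $-k\in A_n=[-1-\sqrt{k^2-1},-\sqrt{k^2-2})$, and $$\mathbb{P}\{S_{n-1}\in A_n\}=\mathbb{P}\{S_{k^2-2}=k\}=\binom{k^2-2}{k(k-1)/2-1}2^{-(k^2-2)},\qquad \mathbb{P}\{S_{n-1}\in B_n\}=0.$$ (ii) For $n=k^2+2i$ with $i\in\{0,1,\dots,k-1\}$: $-1-k\in A_n=[-1-\sqrt{k^2+2i},-\sqrt{k^2+2i-1})$, and $$\mathbb{P}\{S_{n-1}\in A_n\}=\mathbb{P}\{S_{k^2+2i-1}=k+1\}=\binom{k^2+2i-1}{k(k-1)/2+i-1}2^{-(k^2+2i-1)},\qquad \mathbb{P}\{S_{n-1}\in B_n\}=0.$$ (iii) For $n=k^2+1+2i$ with $i\in\{0,1,\dots,k-1\}$: $-k\in B_n=[-\sqrt{k^2+2i},1-\sqrt{k^2+1+2i})$, and $$\mathbb{P}\{S_{n-1}\in B_n\}=\mathbb{P}\{S_{k^2+2i}=k\}=\binom{k^2+2i}{k(k-1)/2+i}2^{-(k^2+2i)},\qquad \mathbb{P}\{S_{n-1}\in A_n\}=0.$$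
   Context: A Rademacher random variable takes the values $1$ and $-1$ each with probability $1/2$. *)

theory Defs
  imports "HOL-Probability.Probability"
begin

definition A_int :: "nat \<Rightarrow> real set" where
  "A_int n = {-1 - sqrt (real n) ..< - sqrt (real n - 1)}"

definition B_int :: "nat \<Rightarrow> real set" where
  "B_int n = {- sqrt (real n - 1) ..< 1 - sqrt (real n)}"

definition psum :: "(nat \<Rightarrow> 'a \<Rightarrow> real) \<Rightarrow> nat \<Rightarrow> 'a \<Rightarrow> real" where
  "psum eps m \<omega> = (\<Sum>j\<in>{1..m}. eps j \<omega>)"

definition rademacher_seq :: "'a measure \<Rightarrow> (nat \<Rightarrow> 'a \<Rightarrow> real) \<Rightarrow> bool" where
  "rademacher_seq M eps \<longleftrightarrow>
     prob_space M \<and>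
     (\<forall>i\<ge>1. eps i \<in> borel_measurable M) \<and>
     (\<forall>i\<ge>1. measure M {\<omega>\<in>space M. eps i \<omega> = 1} = 1/2 \<and>
             measure M {\<omega>\<in>space M. eps i \<omega> = -1} = 1/2) \<and>
     prob_space.indep_vars M (\<lambda>_. borel) eps {1..}"

end

theory Submission
  imports Defs
begin

text \<open>After m steps the walk is almost surely at one of the points a - b with a + b = m
  (a steps up, b steps down), and it is at a - b with probability C(m,b)/2^m. Distinct such
  points differ by at least 2, so a half-open window of length 2 carries the mass of at most
  one of them. A_n and B_n split the window [-1 - sqrt n, 1 - sqrt n) into two disjoint pieces;
  whichever of them contains a support point of S_{n-1} therefore carries exactly the mass of
  that point, and the other one carries none. For n = k^2 - 1, k^2 + 2i, k^2 + 1 + 2i this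
  point is -k in A_n, -1-k in A_n and -k in B_n respectively, and by the symmetry of the walk
  its mass equals that of k, k+1 and k.\<close>

definition walk_support :: "nat \<Rightarrow> real set" where
  "walk_support m = {real a - real b | a b. a + b = m}"

lemma walk_support_0: "walk_support 0 = {0}"
  by (auto simp: walk_support_def)

lemma walk_support_Suc:
  assumes "x \<in> walk_support m" and "e = 1 \<or> e = -1"
  shows "x + e \<in> walk_support (Suc m)"
proof -
  obtain a b where ab: "a + b = m" "x = real a - real b"
    using assms(1) by (auto simp: walk_support_def)
  from assms(2) show ?thesis
  proof
    assume "e = 1"
    then have "x + e = real (Suc a) - real b" using ab by simp
    then show ?thesis using ab unfolding walk_support_def by fastforce
  next
    assume "e = -1"
    then have "x + e = real a - real (Suc b)" using ab by simp
    then show ?thesis using ab unfolding walk_support_def by fastforce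
  qed
qed

lemma walk_support_bounded: "x \<in> walk_support m \<Longrightarrow> \<bar>x\<bar> \<le> real m"
  by (auto simp: walk_support_def)

lemma walk_support_uminus: "- x \<in> walk_support m \<longleftrightarrow> x \<in> walk_support m"
proof -
  have "- x \<in> walk_support m" if x: "x \<in> walk_support m" for x
  proof -
    obtain a b where "a + b = m" "x = real a - real b"
      using x by (auto simp: walk_support_def)
    then have "b + a = m" "- x = real b - real a" by simp_all
    then show ?thesis unfolding walk_support_def by blast
  qed
  from this[of x] this[of "- x"] show ?thesis by auto
qed

lemma walk_support_dist:
  assumes "x \<in> walk_support m" and "y \<in> walk_support m" and "\<bar>x - y\<bar> < 2"
  shows "x = y"
proof -
  obtain a b a' b' where ab: "a + b = m" "x = real a - real b" "a' + b' = m" "y = real a' - real b'"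
    using assms(1,2) by (auto simp: walk_support_def)
  then have "x - y = 2 * (real a - real a')" by simp
  with assms(3) have close: "\<bar>real a - real a'\<bar> < 1" by simp
  have "a = a'"
  proof (rule ccontr)
    assume "a \<noteq> a'"
    then have "a + 1 \<le> a' \<or> a' + 1 \<le> a" by linarith
    then have "real a + 1 \<le> real a' \<or> real a' + 1 \<le> real a"
      by (metis of_nat_1 of_nat_add of_nat_le_iff)
    with close show False by linarith
  qed
  with ab show ?thesis by simp
qed

lemma rademacher_seq_prob_space: "rademacher_seq M eps \<Longrightarrow> prob_space M"
  by (simp add: rademacher_seq_def)

lemma psum_0 [simp]: "psum eps 0 \<omega> = 0"
  by (simp add: psum_def)

lemma psum_Suc: "psum eps (Suc m) \<omega> = psum eps m \<omega> + eps (Suc m) \<omega>"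
  by (simp add: psum_def)

lemma psum_measurable:
  assumes "rademacher_seq M eps"
  shows "psum eps m \<in> borel_measurable M"
proof -
  have "(\<lambda>\<omega>. \<Sum>j\<in>{1..m}. eps j \<omega>) \<in> borel_measurable M"
    using assms by (intro borel_measurable_sum) (auto simp: rademacher_seq_def)
  then show ?thesis by (simp add: psum_def [abs_def])
qed

lemma rademacher_seq_AE_sign:
  assumes R: "rademacher_seq M eps" and i: "1 \<le> i"
  shows "AE \<omega> in M. eps i \<omega> = 1 \<or> eps i \<omega> = -1"
proof -
  interpret prob_space M using R by (rule rademacher_seq_prob_space)
  have meas: "eps i \<in> borel_measurable M" using R i by (simp add: rademacher_seq_def)
  have "prob {\<omega>\<in>space M. eps i \<omega> = 1 \<or> eps i \<omega> = -1}
      = prob {\<omega>\<in>space M. eps i \<omega> = 1} + prob {\<omega>\<in>space M. eps i \<omega> = -1}"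
    using meas by (subst finite_measure_Union [symmetric]) (auto intro!: arg_cong [where f = prob])
  also have "\<dots> = 1/2 + 1/2" using R i unfolding rademacher_seq_def by auto
  finally show ?thesis using meas by (subst prob_Collect_eq_1 [symmetric]) simp_all
qed

lemma AE_psum_in_walk_support:
  assumes "rademacher_seq M eps"
  shows "AE \<omega> in M. psum eps m \<omega> \<in> walk_support m"
proof (induction m)
  case 0
  show ?case by (simp add: walk_support_0)
next
  case (Suc m)
  with rademacher_seq_AE_sign [OF assms, of "Suc m", simplified] show ?case
    by eventually_elim (auto simp: psum_Suc intro: walk_support_Suc)
qed

lemma prob_psum_eq_outside_walk_support:
  assumes "rademacher_seq M eps" and "x \<notin> walk_support m"
  shows "measure M {\<omega>\<in>space M. psum eps m \<omega> = x} = 0"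
proof -
  interpret prob_space M using assms(1) by (rule rademacher_seq_prob_space)
  from AE_psum_in_walk_support [OF assms(1), of m] have "AE \<omega> in M. psum eps m \<omega> \<noteq> x"
    by eventually_elim (use assms(2) in auto)
  then show ?thesis by (rule prob_eq_0_AE)
qed

lemma prob_psum_Suc_eq:
  assumes R: "rademacher_seq M eps"
  shows "measure M {\<omega>\<in>space M. psum eps (Suc m) \<omega> = x}
    = measure M {\<omega>\<in>space M. psum eps m \<omega> = x - 1} / 2
      + measure M {\<omega>\<in>space M. psum eps m \<omega> = x + 1} / 2"
proof -
  interpret prob_space M using R by (rule rademacher_seq_prob_space)
  let ?e = "eps (Suc m)" and ?S = "psum eps m"
  have me: "?e \<in> borel_measurable M" using R by (simp add: rademacher_seq_def)
  have mS: "?S \<in> borel_measurable M" using R by (rule psum_measurable)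
  have "indep_vars (\<lambda>_. borel) eps (insert (Suc m) {1..m})"
    using R unfolding rademacher_seq_def by (auto intro: indep_vars_subset)
  then have "indep_var borel ?e borel (\<lambda>\<omega>. \<Sum>j\<in>{1..m}. eps j \<omega>)"
    by (rule indep_vars_sum [rotated 2]) auto
  then have indep: "indep_var borel ?e borel ?S"
    by (simp add: psum_def [abs_def])
  have half: "prob {\<omega>\<in>space M. ?e \<omega> = 1} = 1/2" "prob {\<omega>\<in>space M. ?e \<omega> = -1} = 1/2"
    using R by (auto simp: rademacher_seq_def)
  have "\<P>(\<omega> in M. psum eps (Suc m) \<omega> = x)
      = \<P>(\<omega> in M. (?e \<omega> = 1 \<and> ?S \<omega> = x - 1) \<or> (?e \<omega> = -1 \<and> ?S \<omega> = x + 1))"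
  proof (rule prob_eq_AE)
    show "AE \<omega> in M. psum eps (Suc m) \<omega> = x
        \<longleftrightarrow> (?e \<omega> = 1 \<and> ?S \<omega> = x - 1) \<or> (?e \<omega> = -1 \<and> ?S \<omega> = x + 1)"
      using rademacher_seq_AE_sign [OF R, of "Suc m", simplified]
      by eventually_elim (auto simp: psum_Suc)
  qed (use psum_measurable [OF R] in measurable, use me mS in measurable)
  also have "\<dots> = \<P>(\<omega> in M. ?e \<omega> \<in> {1} \<and> ?S \<omega> \<in> {x - 1})
      + \<P>(\<omega> in M. ?e \<omega> \<in> {-1} \<and> ?S \<omega> \<in> {x + 1})"
    using me mS by (subst finite_measure_Union [symmetric]) (auto intro!: arg_cong [where f = prob])
  also have "\<dots> = \<P>(\<omega> in M. ?e \<omega> \<in> {1}) * \<P>(\<omega> in M. ?S \<omega> \<in> {x - 1})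
      + \<P>(\<omega> in M. ?e \<omega> \<in> {-1}) * \<P>(\<omega> in M. ?S \<omega> \<in> {x + 1})"
    using prob_indep_random_variable [OF indep, of "{1}" "{x - 1}"]
      prob_indep_random_variable [OF indep, of "{-1}" "{x + 1}"] by simp
  finally show ?thesis using half by simp
qed

lemma prob_psum_eq_binomial:
  assumes R: "rademacher_seq M eps" and "a + b = m"
  shows "measure M {\<omega>\<in>space M. psum eps m \<omega> = real a - real b} = real (m choose b) / 2 ^ m"
  using assms(2)
proof (induction m arbitrary: a b)
  case 0
  interpret prob_space M using R by (rule rademacher_seq_prob_space)
  from 0 show ?case by (simp add: prob_space)
next
  case (Suc m)
  have low: "measure M {\<omega>\<in>space M. psum eps m \<omega> = - real m - 2} = 0"
    and high: "measure M {\<omega>\<in>space M. psum eps m \<omega> = real m + 2} = 0"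
    by (rule prob_psum_eq_outside_walk_support [OF R]; use walk_support_bounded in force)+
  consider "a = 0" | "b = 0" | a' b' where "a = Suc a'" "b = Suc b'"
    by (meson not0_implies_Suc)
  then show ?case
  proof cases
    case 1
    with Suc.prems have x: "real a - real b - 1 = - real m - 2" "real a - real b + 1 = real 0 - real m"
      by simp_all
    have "measure M {\<omega>\<in>space M. psum eps m \<omega> = real 0 - real m} = real (m choose m) / 2 ^ m"
      by (rule Suc.IH) simp
    then show ?thesis
      unfolding prob_psum_Suc_eq [OF R] x low using 1 Suc.prems by simp
  next
    case 2
    with Suc.prems have x: "real a - real b - 1 = real m - real 0" "real a - real b + 1 = real m + 2"
      by simp_all
    have "measure M {\<omega>\<in>space M. psum eps m \<omega> = real m - real 0} = real (m choose 0) / 2 ^ m"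
      by (rule Suc.IH) simp
    then show ?thesis
      unfolding prob_psum_Suc_eq [OF R] x high using 2 by simp
  next
    case 3
    then have x: "real a - real b - 1 = real a' - real b" "real a - real b + 1 = real a - real b'"
      by simp_all
    have "measure M {\<omega>\<in>space M. psum eps m \<omega> = real a' - real b} = real (m choose b) / 2 ^ m"
      and "measure M {\<omega>\<in>space M. psum eps m \<omega> = real a - real b'} = real (m choose b') / 2 ^ m"
      by (rule Suc.IH; use 3 Suc.prems in simp)+
    then show ?thesis
      unfolding prob_psum_Suc_eq [OF R] x using 3 by (simp add: add_divide_distrib)
  qed
qed

lemma prob_psum_uminus_eq:
  assumes R: "rademacher_seq M eps"
  shows "measure M {\<omega>\<in>space M. psum eps m \<omega> = - x} = measure M {\<omega>\<in>space M. psum eps m \<omega> = x}"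
proof (cases "x \<in> walk_support m")
  case True
  then obtain a b where ab: "a + b = m" "x = real a - real b"
    by (auto simp: walk_support_def)
  then have "- x = real b - real a" "b + a = m" by simp_all
  moreover have "m choose a = m choose b"
    using binomial_symmetric [of a m] unfolding ab(1) [symmetric] by simp
  ultimately show ?thesis
    using ab prob_psum_eq_binomial [OF R] by metis
next
  case False
  then show ?thesis
    using walk_support_uminus prob_psum_eq_outside_walk_support [OF R] by metis
qed

lemma prob_psum_in_window:
  assumes R: "rademacher_seq M eps" and t: "t \<in> walk_support m" "t \<in> I"
    and I: "I \<subseteq> {c..<c + 2}" "I \<in> sets borel"
  shows "measure M {\<omega>\<in>space M. psum eps m \<omega> \<in> I} = measure M {\<omega>\<in>space M. psum eps m \<omega> = t}"
proof -
  interpret prob_space M using R by (rule rademacher_seq_prob_space)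
  have meas: "psum eps m \<in> borel_measurable M" using R by (rule psum_measurable)
  show ?thesis
  proof (rule prob_eq_AE)
    show "AE \<omega> in M. psum eps m \<omega> \<in> I \<longleftrightarrow> psum eps m \<omega> = t"
      using AE_psum_in_walk_support [OF R, of m]
    proof eventually_elim
      case (elim \<omega>)
      have "\<bar>psum eps m \<omega> - t\<bar> < 2" if "psum eps m \<omega> \<in> I"
        using subsetD [OF I(1) that] subsetD [OF I(1) t(2)] by (simp add: abs_less_iff)
      with elim t show ?case by (auto intro: walk_support_dist)
    qed
  qed (use meas I(2) in measurable, use meas in measurable)
qed

lemma prob_psum_in_window_eq_0:
  assumes R: "rademacher_seq M eps" and t: "t \<in> walk_support m" "t \<in> {c..<c + 2} - I"
    and I: "I \<subseteq> {c..<c + 2}"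
  shows "measure M {\<omega>\<in>space M. psum eps m \<omega> \<in> I} = 0"
proof -
  interpret prob_space M using R by (rule rademacher_seq_prob_space)
  from AE_psum_in_walk_support [OF R, of m] have "AE \<omega> in M. psum eps m \<omega> \<notin> I"
  proof eventually_elim
    case (elim \<omega>)
    show ?case
    proof
      assume "psum eps m \<omega> \<in> I"
      with t I have "\<bar>psum eps m \<omega> - t\<bar> < 2" "psum eps m \<omega> \<noteq> t"
        by (auto simp: abs_less_iff)
      with elim t(1) show False by (auto dest: walk_support_dist)
    qed
  qed
  then show ?thesis by (rule prob_eq_0_AE)
qed

lemma prob_psum_window_halves:
  assumes R: "rademacher_seq M eps" and ab: "a + b = m" "real a - real b = t"
    and I: "- t \<in> I" "I \<in> sets borel" and IJ: "I \<union> J \<subseteq> {c..<c + 2}" "I \<inter> J = {}"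
  shows "measure M {\<omega>\<in>space M. psum eps m \<omega> \<in> I} = measure M {\<omega>\<in>space M. psum eps m \<omega> = t}"
    and "measure M {\<omega>\<in>space M. psum eps m \<omega> \<in> J} = 0"
proof -
  have supp: "- t \<in> walk_support m"
    using ab walk_support_uminus unfolding walk_support_def by blast
  have "measure M {\<omega>\<in>space M. psum eps m \<omega> \<in> I} = measure M {\<omega>\<in>space M. psum eps m \<omega> = - t}"
    using prob_psum_in_window [OF R supp I(1) _ I(2)] IJ(1) by blast
  then show "measure M {\<omega>\<in>space M. psum eps m \<omega> \<in> I} = measure M {\<omega>\<in>space M. psum eps m \<omega> = t}"
    using prob_psum_uminus_eq [OF R] by simp
  show "measure M {\<omega>\<in>space M. psum eps m \<omega> \<in> J} = 0"
    using prob_psum_in_window_eq_0 [OF R supp] I(1) IJ by blast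
qed

lemma A_int_Un_B_int_window:
  assumes "1 \<le> n"
  shows "A_int n \<union> B_int n \<subseteq> {-1 - sqrt (real n) ..< -1 - sqrt (real n) + 2}"
proof -
  have "sqrt (real n) \<le> 1 + sqrt (real n - 1)"
  proof (rule real_le_lsqrt)
    have "0 \<le> sqrt (real n - 1)" using assms by simp
    then show "real n \<le> (1 + sqrt (real n - 1))\<^sup>2"
      using assms by (simp add: power2_eq_square algebra_simps)
  qed (use assms in simp)
  moreover have "sqrt (real n - 1) \<le> sqrt (real n)" by simp
  ultimately have "-1 - sqrt (real n) \<le> - sqrt (real n - 1)" "- sqrt (real n - 1) \<le> 1 - sqrt (real n)"
    by linarith+
  then show ?thesis by (auto simp: A_int_def B_int_def)
qed

lemma A_int_disjoint_B_int: "A_int n \<inter> B_int n = {}"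
  by (auto simp: A_int_def B_int_def)

lemma A_int_borel: "A_int n \<in> sets borel"
  by (simp add: A_int_def)

lemma B_int_borel: "B_int n \<in> sets borel"
  by (simp add: B_int_def)

lemma double_half_pred_mult_add: "2 * (k * (k - 1) div 2) + k = k\<^sup>2" for k :: nat
  by (cases k) (simp_all add: power2_eq_square algebra_simps)

lemma psum_intervals_square_minus_one:
  assumes R: "rademacher_seq M eps" and k: "2 \<le> k"
  shows "let n = k^2 - 1; S = psum eps (n - 1) in
       - real k \<in> A_int n \<and>
       A_int n = {-1 - sqrt (real (k^2 - 1)) ..< - sqrt (real (k^2 - 2))} \<and>
       measure M {\<omega>\<in>space M. S \<omega> \<in> A_int n} = measure M {\<omega>\<in>space M. psum eps (k^2 - 2) \<omega> = real k} \<and>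
       measure M {\<omega>\<in>space M. psum eps (k^2 - 2) \<omega> = real k}
         = real ((k^2 - 2) choose (k * (k - 1) div 2 - 1)) / 2 ^ (k^2 - 2) \<and>
       measure M {\<omega>\<in>space M. S \<omega> \<in> B_int n} = 0"
proof -
  define c where "c = k * (k - 1) div 2"
  have c: "2 * c + k = k\<^sup>2" unfolding c_def by (rule double_half_pred_mult_add)
  have "2 * k \<le> k\<^sup>2" using k by (simp add: power2_eq_square)
  with c k have c1: "1 \<le> c" and k2: "2 \<le> k\<^sup>2" and n: "1 \<le> k\<^sup>2 - 1" by linarith+
  then have n2: "real (k\<^sup>2 - 1) - 1 = real (k\<^sup>2 - 2)" by (simp add: of_nat_diff)
  have ab: "(c - 1 + k) + (c - 1) = k\<^sup>2 - 2" and t: "real (c - 1 + k) - real (c - 1) = real k"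
    using c c1 by (simp_all add: of_nat_diff)
  have rk: "real (k\<^sup>2 - 1) = (real k)\<^sup>2 - 1" using n by (simp add: of_nat_diff)
  have "real k - 1 \<le> sqrt (real (k\<^sup>2 - 1))"
    by (rule real_le_rsqrt) (use k in \<open>simp add: rk power2_eq_square algebra_simps\<close>)
  moreover have "sqrt (real (k\<^sup>2 - 1) - 1) < real k"
    by (rule real_less_lsqrt) (simp, use rk in linarith)
  ultimately have mem: "- real k \<in> A_int (k\<^sup>2 - 1)"
    unfolding A_int_def by auto
  have Aeq: "A_int (k\<^sup>2 - 1) = {-1 - sqrt (real (k\<^sup>2 - 1)) ..< - sqrt (real (k\<^sup>2 - 2))}"
    unfolding A_int_def n2 ..
  have m: "k\<^sup>2 - 1 - 1 = k\<^sup>2 - 2" by simp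
  show ?thesis
    using prob_psum_window_halves [OF R ab t mem A_int_borel A_int_Un_B_int_window [OF n]
        A_int_disjoint_B_int]
      prob_psum_eq_binomial [OF R ab, unfolded t] mem Aeq
    unfolding Let_def m c_def [symmetric] by blast
qed

lemma psum_intervals_square_plus_even:
  assumes R: "rademacher_seq M eps" and k: "2 \<le> k" and i: "i < k"
  shows "let n = k^2 + 2*i; S = psum eps (n - 1) in
       - 1 - real k \<in> A_int n \<and>
       A_int n = {-1 - sqrt (real (k^2 + 2*i)) ..< - sqrt (real (k^2 + 2*i) - 1)} \<and>
       measure M {\<omega>\<in>space M. S \<omega> \<in> A_int n}
         = measure M {\<omega>\<in>space M. psum eps (k^2 + 2*i - 1) \<omega> = real k + 1} \<and>
       measure M {\<omega>\<in>space M. psum eps (k^2 + 2*i - 1) \<omega> = real k + 1}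
         = real ((k^2 + 2*i - 1) choose (k * (k - 1) div 2 + i - 1)) / 2 ^ (k^2 + 2*i - 1) \<and>
       measure M {\<omega>\<in>space M. S \<omega> \<in> B_int n} = 0"
proof -
  define c where "c = k * (k - 1) div 2"
  have c: "2 * c + k = k\<^sup>2" unfolding c_def by (rule double_half_pred_mult_add)
  have "2 * k \<le> k\<^sup>2" using k by (simp add: power2_eq_square)
  with c k have c1: "1 \<le> c" and n: "1 \<le> k\<^sup>2 + 2 * i" by linarith+
  have ab: "(c + i + k) + (c + i - 1) = k\<^sup>2 + 2 * i - 1"
    and t: "real (c + i + k) - real (c + i - 1) = real k + 1"
    using c c1 by (simp_all add: of_nat_diff)
  have "real k \<le> sqrt (real (k\<^sup>2 + 2 * i))"
    by (rule real_le_rsqrt) simp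
  moreover have "sqrt (real (k\<^sup>2 + 2 * i) - 1) < real k + 1"
    by (rule real_less_lsqrt) (use i in \<open>simp_all add: power2_eq_square algebra_simps\<close>)
  ultimately have mem: "- (real k + 1) \<in> A_int (k\<^sup>2 + 2 * i)"
    unfolding A_int_def by auto
  show ?thesis
    using prob_psum_window_halves [OF R ab t mem A_int_borel A_int_Un_B_int_window [OF n]
        A_int_disjoint_B_int]
      prob_psum_eq_binomial [OF R ab, unfolded t] mem
    unfolding Let_def c_def [symmetric] by (simp add: A_int_def)
qed

lemma psum_intervals_square_plus_odd:
  assumes R: "rademacher_seq M eps" and k: "2 \<le> k" and i: "i < k"
  shows "let n = k^2 + 1 + 2*i; S = psum eps (n - 1) in
       - real k \<in> B_int n \<and>
       B_int n = {- sqrt (real (k^2 + 2*i)) ..< 1 - sqrt (real (k^2 + 1 + 2*i))} \<and>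
       measure M {\<omega>\<in>space M. S \<omega> \<in> B_int n}
         = measure M {\<omega>\<in>space M. psum eps (k^2 + 2*i) \<omega> = real k} \<and>
       measure M {\<omega>\<in>space M. psum eps (k^2 + 2*i) \<omega> = real k}
         = real ((k^2 + 2*i) choose (k * (k - 1) div 2 + i)) / 2 ^ (k^2 + 2*i) \<and>
       measure M {\<omega>\<in>space M. S \<omega> \<in> A_int n} = 0"
proof -
  define c where "c = k * (k - 1) div 2"
  have c: "2 * c + k = k\<^sup>2" unfolding c_def by (rule double_half_pred_mult_add)
  have ab: "(c + i + k) + (c + i) = k\<^sup>2 + 2 * i"
    and t: "real (c + i + k) - real (c + i) = real k"
    using c by simp_all
  have "real k \<le> sqrt (real (k\<^sup>2 + 2 * i))"
    by (rule real_le_rsqrt) simp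
  moreover have "sqrt (real (k\<^sup>2 + 1 + 2 * i)) < real k + 1"
    by (rule real_less_lsqrt) (use i in \<open>simp_all add: power2_eq_square algebra_simps\<close>)
  ultimately have mem: "- real k \<in> B_int (k\<^sup>2 + 1 + 2 * i)"
    unfolding B_int_def by auto
  have window: "B_int (k\<^sup>2 + 1 + 2 * i) \<union> A_int (k\<^sup>2 + 1 + 2 * i)
      \<subseteq> {-1 - sqrt (real (k\<^sup>2 + 1 + 2 * i)) ..< -1 - sqrt (real (k\<^sup>2 + 1 + 2 * i)) + 2}"
    using A_int_Un_B_int_window [of "k\<^sup>2 + 1 + 2 * i"] by auto
  have disjoint: "B_int (k\<^sup>2 + 1 + 2 * i) \<inter> A_int (k\<^sup>2 + 1 + 2 * i) = {}"
    using A_int_disjoint_B_int by blast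
  have m: "k\<^sup>2 + 1 + 2 * i - 1 = k\<^sup>2 + 2 * i" by simp
  show ?thesis
    using prob_psum_window_halves [OF R ab t mem B_int_borel window disjoint]
      prob_psum_eq_binomial [OF R ab, unfolded t] mem
    unfolding Let_def m c_def [symmetric] by (simp add: B_int_def)
qed

theorem lemma2p1:
  fixes M :: "'a measure" and eps :: "nat \<Rightarrow> 'a \<Rightarrow> real" and k :: nat
  assumes "rademacher_seq M eps" and "k \<ge> 2"
  shows
    "(let n = k^2 - 1; S = psum eps (n - 1) in
       - real k \<in> A_int n \<and>
       A_int n = {-1 - sqrt (real (k^2 - 1)) ..< - sqrt (real (k^2 - 2))} \<and>
       measure M {\<omega>\<in>space M. S \<omega> \<in> A_int n} = measure M {\<omega>\<in>space M. psum eps (k^2 - 2) \<omega> = real k} \<and>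
       measure M {\<omega>\<in>space M. psum eps (k^2 - 2) \<omega> = real k}
         = real ((k^2 - 2) choose (k * (k - 1) div 2 - 1)) / 2 ^ (k^2 - 2) \<and>
       measure M {\<omega>\<in>space M. S \<omega> \<in> B_int n} = 0)
   \<and> (\<forall>i<k. let n = k^2 + 2*i; S = psum eps (n - 1) in
       - 1 - real k \<in> A_int n \<and>
       A_int n = {-1 - sqrt (real (k^2 + 2*i)) ..< - sqrt (real (k^2 + 2*i) - 1)} \<and>
       measure M {\<omega>\<in>space M. S \<omega> \<in> A_int n}
         = measure M {\<omega>\<in>space M. psum eps (k^2 + 2*i - 1) \<omega> = real k + 1} \<and>
       measure M {\<omega>\<in>space M. psum eps (k^2 + 2*i - 1) \<omega> = real k + 1}
         = real ((k^2 + 2*i - 1) choose (k * (k - 1) div 2 + i - 1)) / 2 ^ (k^2 + 2*i - 1) \<and>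
       measure M {\<omega>\<in>space M. S \<omega> \<in> B_int n} = 0)
   \<and> (\<forall>i<k. let n = k^2 + 1 + 2*i; S = psum eps (n - 1) in
       - real k \<in> B_int n \<and>
       B_int n = {- sqrt (real (k^2 + 2*i)) ..< 1 - sqrt (real (k^2 + 1 + 2*i))} \<and>
       measure M {\<omega>\<in>space M. S \<omega> \<in> B_int n}
         = measure M {\<omega>\<in>space M. psum eps (k^2 + 2*i) \<omega> = real k} \<and>
       measure M {\<omega>\<in>space M. psum eps (k^2 + 2*i) \<omega> = real k}
         = real ((k^2 + 2*i) choose (k * (k - 1) div 2 + i)) / 2 ^ (k^2 + 2*i) \<and>
       measure M {\<omega>\<in>space M. S \<omega> \<in> A_int n} = 0)"
  using assms
  by (intro conjI allI impI psum_intervals_square_minus_one psum_intervals_square_plus_even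
      psum_intervals_square_plus_odd)

end
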